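(* Let $P.\phi$ be a DQBF with prefix $P=\forall x_1,\dots,x_n\,\exists y_1(D_1),\dots,y_k(D_k)$ for $X$ and $Y$, and let $G_{\mathrm{sem}}$ be a semantic symmetry group for $P.\phi$. If $\psi\in\operatorname{BF}(X\cup Y)$ is a conjunctive symmetry breaker for $G_{\mathrm{sem}}$, then $P.\phi$ is true if and only if $P.(\phi\wedge\psi)$ is true.
   Context: $X=\{x_1,\dots,x_n\}$ and $Y=\{y_1,\dots,y_k\}$ are finite disjoint sets of propositional variables. For $V\subseteq X\cup Y$, $\operatorname{BF}(V)$ is the set of all propositional formulas built from $\top,\bot$, the variables in $V$ and the usual connectives. An assignment for $V$ is a function $\sigma:V\to\{\top,\bot\}$; $\mathcal A(V)$ is the set of all of them and $[\phi]_\sigma$ is the truth value of $\phi$ under $\sigma$. A prefix is $P=\forall x_1,\dots,x_n\,\exists y_1(D_1),\dots,y_k(D_k)$ with dependency sets $D_j\subseteq X$; for $\phi\in\operatorname{BF}(X\cup Y)$, $P.\phi$ is a DQBF. An interpretation for $P$ is a tuple $s=(s_1,\dots,s_k)$ of Boolean functions $s_j:\{\top,\bot\}^{|D_j|}\to\{\top,\bot\}$ (each can be represented by a formula in $\operatorname{BF}(D_j)$); $\mathcal S(P)$ is the set of interpretations. For $\sigma\in\mathcal A(X)$ and $s\in\mathcal S(P)$, the induced assignment $\sigma_s\in\mathcal A(X\cup Y)$ agrees with $\sigma$ on $X$ and sets $\sigma_s(y_j)=s_j(\sigma(x_{i_1}),\dots,\sigma(x_{i_d}))$ where $D_j=\{x_{i_1},\dots,x_{i_d}\}$,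 $i_1<\dots<i_d$. The truth value of $P.\phi$ under $s$ is $[P.\phi]_s=\bigwedge_{\sigma\in\mathcal A(X)}[\phi]_{\sigma_s}$; $P.\phi$ is true if some $s$ has $[P.\phi]_s=\top$ (such $s$ is a model). A semantic symmetry group for $P.\phi$ is a group (under composition) $G$ of bijections $\mathcal S(P)\to\mathcal S(P)$ such that $[P.\phi]_s=[P.\phi]_{g(s)}$ for all $g\in G$, $s\in\mathcal S(P)$. Given a group $G_{\mathrm{sem}}$ of bijections $\mathcal S(P)\to\mathcal S(P)$, a formula $\psi\in\operatorname{BF}(X\cup Y)$ is a conjunctive symmetry breaker for $G_{\mathrm{sem}}$ if for every $s\in\mathcal S(P)$ there is $g\in G_{\mathrm{sem}}$ with $[P.\psi]_{g(s)}=\top$. *)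

theory Defs
  imports Main
begin

text \<open>Propositional variables: universal x_i (XV i, 0 \<le> i < n) and existential y_j (YV j, 0 \<le> j < k).\<close>
datatype var = XV nat | YV nat

datatype 'v bf = Top | Bot | Var 'v | Neg "'v bf" | Conj "'v bf" "'v bf" | Disj "'v bf" "'v bf"
  | Impl "'v bf" "'v bf" | Equiv "'v bf" "'v bf"

primrec eval :: "('v \<Rightarrow> bool) \<Rightarrow> 'v bf \<Rightarrow> bool" where
  "eval a Top = True"
| "eval a Bot = False"
| "eval a (Var v) = a v"
| "eval a (Neg f) = (\<not> eval a f)"
| "eval a (Conj f g) = (eval a f \<and> eval a g)"
| "eval a (Disj f g) = (eval a f \<or> eval a g)"
| "eval a (Impl f g) = (eval a f \<longrightarrow> eval a g)"
| "eval a (Equiv f g) = (eval a f \<longleftrightarrow> eval a g)"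

primrec vars :: "'v bf \<Rightarrow> 'v set" where
  "vars Top = {}"
| "vars Bot = {}"
| "vars (Var v) = {v}"
| "vars (Neg f) = vars f"
| "vars (Conj f g) = vars f \<union> vars g"
| "vars (Disj f g) = vars f \<union> vars g"
| "vars (Impl f g) = vars f \<union> vars g"
| "vars (Equiv f g) = vars f \<union> vars g"

definition BF :: "nat \<Rightarrow> nat \<Rightarrow> var bf set" where
  "BF n k = {f. vars f \<subseteq> XV ` {..<n} \<union> YV ` {..<k}}"

definition wf_prefix :: "nat \<Rightarrow> nat \<Rightarrow> (nat \<Rightarrow> nat set) \<Rightarrow> bool" where
  "wf_prefix n k D \<longleftrightarrow> (\<forall>j<k. D j \<subseteq> {..<n})"

text \<open>Assignments for X, canonically represented (value False beyond index n).\<close>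
definition assignsX :: "nat \<Rightarrow> (nat \<Rightarrow> bool) set" where
  "assignsX n = {\<sigma>. \<forall>i\<ge>n. \<sigma> i = False}"

text \<open>Interpretations: s j is a Boolean function of the values of the variables in D j,
  represented as a function of the X-assignment depending only on the coordinates in D j
  (these are in bijection with functions {\<top>,\<bot>}^|D j| \<rightarrow> {\<top>,\<bot>}); s j is a fixed dummy for j \<ge> k.\<close>
definition interps :: "nat \<Rightarrow> nat \<Rightarrow> (nat \<Rightarrow> nat set) \<Rightarrow> (nat \<Rightarrow> (nat \<Rightarrow> bool) \<Rightarrow> bool) set" where
  "interps n k D = {s. (\<forall>j<k. \<forall>\<sigma> \<tau>. (\<forall>i\<in>D j. \<sigma> i = \<tau> i) \<longrightarrow> s j \<sigma> = s j \<tau>)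
                       \<and> (\<forall>j\<ge>k. s j = (\<lambda>_. False))}"

definition induced :: "(nat \<Rightarrow> bool) \<Rightarrow> (nat \<Rightarrow> (nat \<Rightarrow> bool) \<Rightarrow> bool) \<Rightarrow> var \<Rightarrow> bool" where
  "induced \<sigma> s v = (case v of XV i \<Rightarrow> \<sigma> i | YV j \<Rightarrow> s j \<sigma>)"

definition dqbf_val :: "nat \<Rightarrow> var bf \<Rightarrow> (nat \<Rightarrow> (nat \<Rightarrow> bool) \<Rightarrow> bool) \<Rightarrow> bool" where
  "dqbf_val n \<phi> s \<longleftrightarrow> (\<forall>\<sigma>\<in>assignsX n. eval (induced \<sigma> s) \<phi>)"

definition dqbf_true :: "nat \<Rightarrow> nat \<Rightarrow> (nat \<Rightarrow> nat set) \<Rightarrow> var bf \<Rightarrow> bool" where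
  "dqbf_true n k D \<phi> \<longleftrightarrow> (\<exists>s\<in>interps n k D. dqbf_val n \<phi> s)"

text \<open>A group (under composition) of bijections of a set S. Maps are taken extensional
  (identity outside S) so that composition/identity are the usual ones on S.\<close>
definition bij_group :: "'a set \<Rightarrow> ('a \<Rightarrow> 'a) set \<Rightarrow> bool" where
  "bij_group S G \<longleftrightarrow>
     (\<forall>g\<in>G. bij_betw g S S \<and> (\<forall>x. x \<notin> S \<longrightarrow> g x = x))
     \<and> id \<in> G
     \<and> (\<forall>g\<in>G. \<forall>h\<in>G. g \<circ> h \<in> G)
     \<and> (\<forall>g\<in>G. \<exists>h\<in>G. h \<circ> g = id)"

definition sem_sym_group :: "nat \<Rightarrow> nat \<Rightarrow> (nat \<Rightarrow> nat set) \<Rightarrow> var bf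
     \<Rightarrow> ((nat \<Rightarrow> (nat \<Rightarrow> bool) \<Rightarrow> bool) \<Rightarrow> (nat \<Rightarrow> (nat \<Rightarrow> bool) \<Rightarrow> bool)) set \<Rightarrow> bool" where
  "sem_sym_group n k D \<phi> G \<longleftrightarrow> bij_group (interps n k D) G
     \<and> (\<forall>g\<in>G. \<forall>s\<in>interps n k D. dqbf_val n \<phi> s = dqbf_val n \<phi> (g s))"

definition conj_sym_breaker :: "nat \<Rightarrow> nat \<Rightarrow> (nat \<Rightarrow> nat set)
     \<Rightarrow> ((nat \<Rightarrow> (nat \<Rightarrow> bool) \<Rightarrow> bool) \<Rightarrow> (nat \<Rightarrow> (nat \<Rightarrow> bool) \<Rightarrow> bool)) set \<Rightarrow> var bf \<Rightarrow> bool" where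
  "conj_sym_breaker n k D G \<psi> \<longleftrightarrow> \<psi> \<in> BF n k
     \<and> (\<forall>s\<in>interps n k D. \<exists>g\<in>G. dqbf_val n \<psi> (g s))"

end

theory Submission
  imports Defs
begin

text \<open>A symmetry g maps a model s of \<phi> to the model g s of \<phi>; choosing g as the breaker
  provides for s makes g s a model of \<psi> as well, hence of \<phi> \<and> \<psi>. The converse is
  monotonicity of truth under strengthening the matrix.\<close>

lemma dqbf_val_Conj:
  "dqbf_val n (Conj \<phi> \<psi>) s \<longleftrightarrow> dqbf_val n \<phi> s \<and> dqbf_val n \<psi> s"
  unfolding dqbf_val_def by auto

lemma dqbf_true_ConjD: "dqbf_true n k D (Conj \<phi> \<psi>) \<Longrightarrow> dqbf_true n k D \<phi>"
  unfolding dqbf_true_def by (auto simp: dqbf_val_Conj)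

lemma bij_group_closed: "bij_group S G \<Longrightarrow> g \<in> G \<Longrightarrow> x \<in> S \<Longrightarrow> g x \<in> S"
  unfolding bij_group_def by (meson bij_betw_apply)

lemma sem_sym_group_model:
  assumes "sem_sym_group n k D \<phi> G" and "g \<in> G"
    and "s \<in> interps n k D" and "dqbf_val n \<phi> s"
  shows "g s \<in> interps n k D" and "dqbf_val n \<phi> (g s)"
proof -
  from assms(1) have "bij_group (interps n k D) G"
    and "\<forall>g\<in>G. \<forall>s\<in>interps n k D. dqbf_val n \<phi> s = dqbf_val n \<phi> (g s)"
    unfolding sem_sym_group_def by simp_all
  with assms(2-4) bij_group_closed
  show "g s \<in> interps n k D" and "dqbf_val n \<phi> (g s)" by metis+
qed

lemma conj_sym_breaker_model:
  assumes G: "sem_sym_group n k D \<phi> G" and \<psi>: "conj_sym_breaker n k D G \<psi>"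
    and s: "s \<in> interps n k D" "dqbf_val n \<phi> s"
  shows "\<exists>g\<in>G. g s \<in> interps n k D \<and> dqbf_val n (Conj \<phi> \<psi>) (g s)"
proof -
  obtain g where "g \<in> G" and "dqbf_val n \<psi> (g s)"
    using \<psi> s unfolding conj_sym_breaker_def by blast
  with sem_sym_group_model[OF G _ s] show ?thesis
    by (auto simp: dqbf_val_Conj)
qed

theorem theorem1:
  fixes n k :: nat and D :: "nat \<Rightarrow> nat set" and \<phi> \<psi> :: "var bf"
    and G :: "((nat \<Rightarrow> (nat \<Rightarrow> bool) \<Rightarrow> bool) \<Rightarrow> (nat \<Rightarrow> (nat \<Rightarrow> bool) \<Rightarrow> bool)) set"
  assumes "wf_prefix n k D"
    and "\<phi> \<in> BF n k"
    and "sem_sym_group n k D \<phi> G"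
    and "conj_sym_breaker n k D G \<psi>"
  shows "dqbf_true n k D \<phi> \<longleftrightarrow> dqbf_true n k D (Conj \<phi> \<psi>)"
proof
  assume "dqbf_true n k D \<phi>"
  then obtain s where "s \<in> interps n k D" and "dqbf_val n \<phi> s"
    unfolding dqbf_true_def by blast
  with conj_sym_breaker_model[OF assms(3,4)] show "dqbf_true n k D (Conj \<phi> \<psi>)"
    unfolding dqbf_true_def by blast
qed (rule dqbf_true_ConjD)

end
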